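(* Let $\bm{Z}\in\{0,1\}^n$ (both groups nonempty), $\bm{X}\in\mathbb{R}^{n\times p}$ with first column all ones and rows $\bm{X}_i$, and $\bm{U}=(U_1,\ldots,U_n)^T\in\mathbb{R}^n$ not constant, with $\bar U=\frac1n\sum_iU_i$. Suppose that Assumptions (A1)–(A3) below hold and that the outcomes follow the linear model $Y_i=\bm{\beta}^T\bm{X}_i+\tau Z_i+\gamma U_i+\epsilon_i$, where the $\epsilon_i$ are i.i.d. with $\mathbb{E}(\epsilon_i)=0$, $\mathrm{Var}(\epsilon_i)=\sigma^2>0$, and $\epsilon_i\perp(\bm{X},\bm{Z},\bm{U})$ for all $i$. Let $\rho^2\ge0$, let $\bm{S}$ be an $n\times n$ symmetric positive semidefinite matrix with orthonormal eigenvectors $\bm{v}_1,\ldots,\bm{v}_n$ and eigenvalues $\lambda_1\ge\cdots\ge\lambda_n\ge0$, $\lambda_1>0$, and let $\bm{\Sigma}=\sigma^2\bm{I}_n+\rho^2\bm{S}$. Let $\hat\tau_{GLS}=\sum_{Z_i=1}w_iY_i-\sum_{Z_i=0}w_iY_i$ be the GLS estimator of $\tau$ with weights $$\bm{w}=\bm{M}\,\frac{(\bm{I}_n-\bm{\Sigma}^{-1}\bm{X}(\bm{X}^T\bm{\Sigma}^{-1}\bm{X})^{-1}\bm{X}^T)\bm{\Sigma}^{-1}\bm{Z}}{\bm{Z}^T\bm{\Sigma}^{-1}(\bm{I}_n-\bm{X}(\bm{X}^T\bm{\Sigma}^{-1}\bm{X})^{-1}\bm{X}^T\bm{\Sigma}^{-1})\bm{Z}}$$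 ($\bm{M}$ diagonal, $M_{ii}=2Z_i-1$; the required inverses assumed to exist and the denominator nonzero). Then, with $\tau_{ATT}=\tau$, $$\Big|\mathbb{E}(\hat\tau_{GLS}\mid\bm{X},\bm{Z},\bm{U})-\tau\Big|=\Big|\gamma\Big(\sum_{i:Z_i=1}w_iU_i-\sum_{i:Z_i=0}w_iU_i\Big)\Big|\le|\gamma|\sqrt{\frac{c_0(2\sigma^2+\rho^2\lambda_1+\rho^2\lambda_n)^2}{4(\sigma^2+\rho^2\lambda_1)(\sigma^2+\rho^2\lambda_n)(\sigma^2+\rho^2\lambda_1\mathcal{I}(\bm{U};\bm{S}))}\sum_{i=1}^n(U_i-\bar U)^2},$$ where $c_0=\sigma^2\sum_{i=1}^nw_i^2+\rho^2\sum_{k=1}^n\lambda_k\big(\sum_{i:Z_i=1}w_iv_{ki}-\sum_{i:Z_i=0}w_iv_{ki}\big)^2$.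
   Context: Potential outcomes $Y_i(1),Y_i(0)$; $\tau_{ATT}=\mathbb{E}[Y_i(1)-Y_i(0)\mid Z_i=1]$. Assumptions: (A1) consistency/no interference: $Y_i=Y_i(z)$ when $Z_i=z$; (A2) positivity: $0<\mathbb{P}(Z_i=1\mid X_i,U_i)<1$; (A3) conditional ignorability: $\{Y_i(1),Y_i(0)\}\perp Z_i\mid X_i,U_i$. The (normalized) Moran's I statistic of $\bm{U}$ relative to $\bm{S}$ is $\mathcal{I}(\bm{U};\bm{S})=\frac{\sum_{i=1}^n\sum_{j=1}^nS_{ij}(U_i-\bar U)(U_j-\bar U)}{\lambda_1\sum_{i=1}^n(U_i-\bar U)^2}$. Here $v_{ki}$ is the $i$-th entry of $\bm{v}_k$. *)

theory Defs
  imports "HOL-Probability.Probability"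
begin

definition Sigma_mat :: "real \<Rightarrow> real \<Rightarrow> real^'n^'n \<Rightarrow> real^'n^'n" where
  "Sigma_mat sigma2 rho2 S = sigma2 *\<^sub>R mat 1 + rho2 *\<^sub>R S"

definition gls_weights :: "real \<Rightarrow> real \<Rightarrow> real^'n^'n \<Rightarrow> real^'p^'n \<Rightarrow> real^'n \<Rightarrow> real^'n" where
  "gls_weights sigma2 rho2 S X Z =
     (let Si = matrix_inv (Sigma_mat sigma2 rho2 S);
          A = matrix_inv (transpose X ** Si ** X);
          num = (mat 1 - Si ** X ** A ** transpose X) *v (Si *v Z);
          den = Z \<bullet> (Si *v ((mat 1 - X ** A ** transpose X ** Si) *v Z))
      in (\<chi> i. (2 * Z$i - 1) * (num$i / den)))"

definition wdiff :: "real^'n \<Rightarrow> real^'n \<Rightarrow> ('n \<Rightarrow> real) \<Rightarrow> real" where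
  "wdiff Z w a = (\<Sum>i\<in>{i. Z$i = 1}. w$i * a i) - (\<Sum>i\<in>{i. Z$i = 0}. w$i * a i)"

definition mean_vec :: "real^'n \<Rightarrow> real" where
  "mean_vec U = (\<Sum>i\<in>UNIV. U$i) / real CARD('n)"

text \<open>Normalized Moran's I of U relative to S, lam1 = largest eigenvalue of S.\<close>
definition moran_I :: "real^'n \<Rightarrow> real^'n^'n \<Rightarrow> real \<Rightarrow> real" where
  "moran_I U S lam1 =
     (\<Sum>i\<in>UNIV. \<Sum>j\<in>UNIV. S$i$j * (U$i - mean_vec U) * (U$j - mean_vec U))
     / (lam1 * (\<Sum>i\<in>UNIV. (U$i - mean_vec U)^2))"

end

theory Submission
  imports Defs
begin

(*
  Let t be the GLS contrast, i.e. the weights w with the signs of the control units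
  undone.  It is orthogonal to the columns of X, in particular to the intercept, and
  t . Z = 1, so under the linear model E tau_hat = tau + gamma (t . U), and
  t . U = t . (U - Ubar).  In the eigenbasis of S the matrix Sigma is diagonal with
  entries mu_k = sigma^2 + rho^2 lambda_k in [mu_n, mu_1].  Cauchy-Schwarz weighted by
  mu_k bounds (t . U)^2 by (t' Sigma t) ((U - Ubar)' Sigma^-1 (U - Ubar)), and
  t' Sigma t = c0.  Kantorovich's inequality bounds the second factor by
  (mu_1 + mu_n)^2 / (4 mu_1 mu_n) |U - Ubar|^4 / ((U - Ubar)' Sigma (U - Ubar)), and
  by the definition of Moran's I the last quadratic form is
  |U - Ubar|^2 (sigma^2 + rho^2 lambda_1 I(U; S)).
*)

lemma orthonormal_family_expansion:
  fixes v :: "'i \<Rightarrow> 'a::euclidean_space"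
  assumes "finite K" and card: "card K = DIM('a)"
    and orthonormal: "\<forall>k\<in>K. \<forall>l\<in>K. v k \<bullet> v l = (if k = l then 1 else 0)"
  shows "x = (\<Sum>k\<in>K. (v k \<bullet> x) *\<^sub>R v k)"
proof -
  have inj: "inj_on v K"
    by (rule inj_onI) (metis orthonormal one_neq_zero)
  have "0 \<notin> v ` K"
    using orthonormal by (metis imageE inner_zero_left zero_neq_one)
  moreover have "pairwise orthogonal (v ` K)"
    using orthonormal unfolding pairwise_def orthogonal_def by auto
  ultimately have "independent (v ` K)"
    by (rule pairwise_orthogonal_independent[rotated])
  then have span: "UNIV \<subseteq> span (v ` K)"
    by (rule card_ge_dim_independent[rotated]) (simp_all add: card card_image[OF inj])
  let ?y = "x - (\<Sum>k\<in>K. (v k \<bullet> x) *\<^sub>R v k)"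
  have y_orthogonal: "?y \<bullet> v l = 0" if "l \<in> K" for l
  proof -
    have "(\<Sum>k\<in>K. (v k \<bullet> x) *\<^sub>R v k) \<bullet> v l = (\<Sum>k\<in>K. (v k \<bullet> x) * (v k \<bullet> v l))"
      by (simp add: inner_sum_left)
    also have "\<dots> = (\<Sum>k\<in>K. if k = l then v l \<bullet> x else 0)"
      by (rule sum.cong) (use orthonormal that in auto)
    also have "\<dots> = v l \<bullet> x"
      using that \<open>finite K\<close> by simp
    finally show ?thesis
      by (simp add: inner_diff_left inner_commute[of x "v l"])
  qed
  have "orthogonal ?y ?y"
    by (rule orthogonal_to_span) (use span y_orthogonal in \<open>auto simp: orthogonal_def\<close>)
  then show ?thesis
    by (simp add: orthogonal_def)
qed

lemma orthonormal_family_inner: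
  fixes v :: "'i \<Rightarrow> 'a::euclidean_space"
  assumes "finite K" and "card K = DIM('a)"
    and "\<forall>k\<in>K. \<forall>l\<in>K. v k \<bullet> v l = (if k = l then 1 else 0)"
  shows "x \<bullet> y = (\<Sum>k\<in>K. (v k \<bullet> x) * (v k \<bullet> y))"
  by (subst orthonormal_family_expansion[OF assms, of x]) (simp add: inner_sum_left)

lemma orthonormal_eigenbasis_quadratic_form:
  fixes v :: "'i \<Rightarrow> 'a::euclidean_space" and f :: "'a \<Rightarrow> 'a"
  assumes "finite K" and "card K = DIM('a)"
    and "\<forall>k\<in>K. \<forall>l\<in>K. v k \<bullet> v l = (if k = l then 1 else 0)"
    and "linear f" and eigen: "\<forall>k\<in>K. f (v k) = lam k *\<^sub>R v k"
  shows "x \<bullet> f x = (\<Sum>k\<in>K. lam k * (v k \<bullet> x)\<^sup>2)"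
proof -
  have "f x = (\<Sum>k\<in>K. (v k \<bullet> x) *\<^sub>R f (v k))"
    by (subst orthonormal_family_expansion[OF assms(1-3), of x])
      (simp add: linear_sum[OF \<open>linear f\<close>] linear_cmul[OF \<open>linear f\<close>])
  also have "\<dots> = (\<Sum>k\<in>K. (lam k * (v k \<bullet> x)) *\<^sub>R v k)"
    by (rule sum.cong) (use eigen in auto)
  finally show ?thesis
    by (simp add: inner_sum_right power2_eq_square inner_commute mult_ac)
qed

lemma weighted_Cauchy_Schwarz:
  fixes p q mu :: "'i \<Rightarrow> real"
  assumes mu_pos: "\<forall>k\<in>K. mu k > 0"
  shows "(\<Sum>k\<in>K. p k * q k)\<^sup>2 \<le> (\<Sum>k\<in>K. mu k * (p k)\<^sup>2) * (\<Sum>k\<in>K. (q k)\<^sup>2 / mu k)"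
proof -
  have "(\<Sum>k\<in>K. p k * q k) = (\<Sum>k\<in>K. (sqrt (mu k) * p k) * (q k / sqrt (mu k)))"
    by (rule sum.cong) (use mu_pos in auto)
  also have "\<dots>\<^sup>2 \<le> (\<Sum>k\<in>K. (sqrt (mu k) * p k)\<^sup>2) * (\<Sum>k\<in>K. (q k / sqrt (mu k))\<^sup>2)"
    by (rule Cauchy_Schwarz_ineq_sum)
  also have "(\<Sum>k\<in>K. (sqrt (mu k) * p k)\<^sup>2) = (\<Sum>k\<in>K. mu k * (p k)\<^sup>2)"
    by (rule sum.cong) (use mu_pos in \<open>auto simp: power_mult_distrib\<close>)
  also have "(\<Sum>k\<in>K. (q k / sqrt (mu k))\<^sup>2) = (\<Sum>k\<in>K. (q k)\<^sup>2 / mu k)"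
    by (rule sum.cong) (use mu_pos in \<open>auto simp: power_divide\<close>)
  finally show ?thesis .
qed

lemma Kantorovich_inequality:
  fixes q mu :: "'i \<Rightarrow> real"
  assumes "0 < a" and mu_range: "\<forall>k\<in>K. a \<le> mu k \<and> mu k \<le> b"
  shows "4 * a * b * ((\<Sum>k\<in>K. mu k * (q k)\<^sup>2) * (\<Sum>k\<in>K. (q k)\<^sup>2 / mu k))
           \<le> ((a + b) * (\<Sum>k\<in>K. (q k)\<^sup>2))\<^sup>2"
proof -
  define T where "T = (\<Sum>k\<in>K. mu k * (q k)\<^sup>2)"
  define R where "R = (\<Sum>k\<in>K. (q k)\<^sup>2 / mu k)"
  have termwise: "0 \<le> mu k * (q k)\<^sup>2 + a * b * ((q k)\<^sup>2 / mu k)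
                    \<and> mu k * (q k)\<^sup>2 + a * b * ((q k)\<^sup>2 / mu k) \<le> (a + b) * (q k)\<^sup>2"
    if "k \<in> K" for k
  proof -
    have mu_k: "a \<le> mu k" "mu k \<le> b" "0 < mu k"
      using mu_range that \<open>0 < a\<close> by auto
    \<comment> \<open>\<open>(mu - a) (mu - b) \<le> 0\<close>, divided by \<open>mu\<close>\<close>
    have "mu k * mu k + a * b \<le> (a + b) * mu k"
      using mult_nonneg_nonpos[of "mu k - a" "mu k - b"] mu_k by (simp add: algebra_simps)
    then have "(mu k * mu k + a * b) * ((q k)\<^sup>2 / mu k) \<le> (a + b) * mu k * ((q k)\<^sup>2 / mu k)"
      by (rule mult_right_mono) (use mu_k in simp)
    moreover have "(mu k * mu k + a * b) * ((q k)\<^sup>2 / mu k)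
                     = mu k * (q k)\<^sup>2 + a * b * ((q k)\<^sup>2 / mu k)"
      using mu_k by (simp add: field_simps power2_eq_square)
    moreover have "0 \<le> a * b * ((q k)\<^sup>2 / mu k)"
      using mu_k \<open>0 < a\<close> by simp
    ultimately show ?thesis
      using mu_k by simp
  qed
  have sum_bounds: "0 \<le> T + a * b * R" "T + a * b * R \<le> (a + b) * (\<Sum>k\<in>K. (q k)\<^sup>2)"
  proof -
    have "T + a * b * R = (\<Sum>k\<in>K. mu k * (q k)\<^sup>2 + a * b * ((q k)\<^sup>2 / mu k))"
      unfolding T_def R_def by (simp add: sum.distrib sum_distrib_left)
    then show "0 \<le> T + a * b * R" "T + a * b * R \<le> (a + b) * (\<Sum>k\<in>K. (q k)\<^sup>2)"
      using termwise by (auto intro!: sum_nonneg sum_mono simp: sum_distrib_left)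
  qed
  have "4 * a * b * (T * R) \<le> (T + a * b * R)\<^sup>2"
    using zero_le_power2[of "T - a * b * R"] by (simp add: power2_eq_square algebra_simps)
  also have "\<dots> \<le> ((a + b) * (\<Sum>k\<in>K. (q k)\<^sup>2))\<^sup>2"
    using sum_bounds by (rule power_mono[rotated])
  finally show ?thesis
    unfolding T_def R_def .
qed

lemma Kantorovich_Cauchy_Schwarz:
  fixes p q mu :: "'i \<Rightarrow> real"
  assumes "finite K" and "0 < a" and mu_range: "\<forall>k\<in>K. a \<le> mu k \<and> mu k \<le> b"
  shows "(\<Sum>k\<in>K. p k * q k)\<^sup>2
           \<le> (\<Sum>k\<in>K. mu k * (p k)\<^sup>2) * (a + b)\<^sup>2 / (4 * a * b)
               * (\<Sum>k\<in>K. (q k)\<^sup>2)\<^sup>2 / (\<Sum>k\<in>K. mu k * (q k)\<^sup>2)"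
proof (cases "\<forall>k\<in>K. q k = 0")
  case True
  then show ?thesis by simp
next
  case False
  then obtain k0 where k0: "k0 \<in> K" "q k0 \<noteq> 0" by auto
  have mu_pos: "\<forall>k\<in>K. mu k > 0"
    using mu_range \<open>0 < a\<close> by force
  then have "0 < b"
    using mu_range k0 by force
  define c0 where "c0 = (\<Sum>k\<in>K. mu k * (p k)\<^sup>2)"
  define T where "T = (\<Sum>k\<in>K. mu k * (q k)\<^sup>2)"
  define R where "R = (\<Sum>k\<in>K. (q k)\<^sup>2 / mu k)"
  have "0 < T"
    unfolding T_def using \<open>finite K\<close> k0 mu_pos
    by (intro sum_pos2[of K k0]) (auto intro: less_imp_le)
  have "0 \<le> c0"
    unfolding c0_def using mu_pos by (auto intro!: sum_nonneg)
  have "(\<Sum>k\<in>K. p k * q k)\<^sup>2 \<le> c0 * R"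
    unfolding c0_def R_def using mu_pos by (rule weighted_Cauchy_Schwarz)
  also have "R \<le> ((a + b) * (\<Sum>k\<in>K. (q k)\<^sup>2))\<^sup>2 / (4 * a * b * T)"
    using Kantorovich_inequality[OF \<open>0 < a\<close> mu_range, of q] \<open>0 < a\<close> \<open>0 < b\<close> \<open>0 < T\<close>
    unfolding T_def[symmetric] R_def[symmetric] by (simp add: pos_le_divide_eq mult_ac)
  then have "c0 * R \<le> c0 * (((a + b) * (\<Sum>k\<in>K. (q k)\<^sup>2))\<^sup>2 / (4 * a * b * T))"
    using \<open>0 \<le> c0\<close> by (rule mult_left_mono)
  finally show ?thesis
    unfolding c0_def[symmetric] T_def[symmetric] by (simp add: power_mult_distrib mult_ac)
qed

definition centered :: "real^'n::finite \<Rightarrow> real^'n" where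
  "centered U = (\<chi> i. U$i - mean_vec U)"

lemma inner_centered_right:
  assumes "t \<bullet> (\<chi> i. 1) = 0"
  shows "t \<bullet> centered U = t \<bullet> U"
proof -
  have "(\<Sum>i\<in>UNIV. t$i) = 0"
    using assms by (simp add: inner_vec_def)
  then show ?thesis
    by (simp add: centered_def inner_vec_def right_diff_distrib sum_subtractf
        sum_distrib_right[symmetric])
qed

lemma inner_centered_self: "centered U \<bullet> centered U = (\<Sum>i\<in>UNIV. (U$i - mean_vec U)\<^sup>2)"
  by (simp add: centered_def inner_vec_def power2_eq_square)

lemma centered_nonzero:
  assumes "\<exists>i j. U$i \<noteq> U$j"
  shows "centered U \<noteq> 0"
proof
  assume "centered U = 0"
  then have "U$i = mean_vec U" for i
    by (simp add: centered_def vec_eq_iff)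
  with assms show False by simp
qed

lemma moran_I_centered:
  "moran_I U S lam1 = centered U \<bullet> (S *v centered U) / (lam1 * (centered U \<bullet> centered U))"
  unfolding moran_I_def inner_centered_self
  by (simp add: centered_def inner_vec_def matrix_vector_mult_def sum_distrib_left mult_ac)

lemma Sigma_mat_eigenvector:
  assumes "S *v x = lam *\<^sub>R x"
  shows "Sigma_mat sigma2 rho2 S *v x = (sigma2 + rho2 * lam) *\<^sub>R x"
  using assms
  by (simp add: Sigma_mat_def matrix_vector_mult_add_rdistrib scaleR_matrix_vector_assoc[symmetric]
      algebra_simps)

lemma inner_Sigma_mat_centered:
  assumes "centered U \<noteq> 0" and "lam1 \<noteq> 0"
  shows "centered U \<bullet> (Sigma_mat sigma2 rho2 S *v centered U)
           = (centered U \<bullet> centered U) * (sigma2 + rho2 * lam1 * moran_I U S lam1)"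
  using assms
  by (simp add: Sigma_mat_def moran_I_centered matrix_vector_mult_add_rdistrib
      scaleR_matrix_vector_assoc[symmetric] inner_add_right field_simps)

lemma contrast_confounder_bound:
  fixes t U :: "real^'n::finite" and S :: "real^'n^'n"
    and v :: "nat \<Rightarrow> real^'n" and lam :: "nat \<Rightarrow> real"
  assumes orthonormal: "\<forall>k\<in>{1..CARD('n)}. \<forall>l\<in>{1..CARD('n)}. v k \<bullet> v l = (if k = l then 1 else 0)"
    and eigen: "\<forall>k\<in>{1..CARD('n)}. S *v v k = lam k *\<^sub>R v k"
    and lam_sorted: "\<forall>k\<in>{1..CARD('n)}. \<forall>l\<in>{1..CARD('n)}. k \<le> l \<longrightarrow> lam l \<le> lam k"
    and lam_nonneg: "lam (CARD('n)) \<ge> 0" and lam1_pos: "lam 1 > 0"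
    and sigma_pos: "sigma2 > 0" and rho_nonneg: "rho2 \<ge> 0"
    and contrast: "t \<bullet> (\<chi> i. 1) = 0" and U_nonconst: "\<exists>i j. U$i \<noteq> U$j"
  shows "(t \<bullet> U)\<^sup>2
           \<le> (sigma2 * (t \<bullet> t) + rho2 * (\<Sum>k=1..CARD('n). lam k * (v k \<bullet> t)\<^sup>2))
               * (2 * sigma2 + rho2 * lam 1 + rho2 * lam CARD('n))\<^sup>2
               / (4 * (sigma2 + rho2 * lam 1) * (sigma2 + rho2 * lam CARD('n))
                    * (sigma2 + rho2 * lam 1 * moran_I U S (lam 1)))
               * (\<Sum>i\<in>UNIV. (U$i - mean_vec U)\<^sup>2)"
proof -
  let ?n = "CARD('n)"
  let ?K = "{1..?n}"
  define mu where "mu k = sigma2 + rho2 * lam k" for k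
  define Uc where "Uc = centered U"
  define SS where "SS = Uc \<bullet> Uc"
  define D where "D = sigma2 + rho2 * lam 1 * moran_I U S (lam 1)"
  have basis: "finite ?K" "card ?K = DIM(real^'n)"
    by simp_all
  note parseval = orthonormal_family_inner[OF basis orthonormal]
  have mu_range: "\<forall>k\<in>?K. mu ?n \<le> mu k \<and> mu k \<le> mu 1"
    using lam_sorted rho_nonneg unfolding mu_def by (auto intro: mult_left_mono)
  have "0 < mu ?n"
    unfolding mu_def using sigma_pos rho_nonneg lam_nonneg by (simp add: add_pos_nonneg)
  have "0 < SS"
    unfolding SS_def Uc_def using centered_nonzero[OF U_nonconst] by simp
  have SS_coeffs: "SS = (\<Sum>k\<in>?K. (v k \<bullet> Uc)\<^sup>2)"
    unfolding SS_def parseval[of Uc Uc] by (simp add: power2_eq_square)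
  have c0_coeffs: "sigma2 * (t \<bullet> t) + rho2 * (\<Sum>k\<in>?K. lam k * (v k \<bullet> t)\<^sup>2)
                     = (\<Sum>k\<in>?K. mu k * (v k \<bullet> t)\<^sup>2)"
    unfolding parseval[of t t] mu_def
    by (simp add: power2_eq_square algebra_simps sum.distrib sum_distrib_left)
  have "(\<Sum>k\<in>?K. mu k * (v k \<bullet> Uc)\<^sup>2) = Uc \<bullet> (Sigma_mat sigma2 rho2 S *v Uc)"
    using eigen unfolding mu_def
    by (intro orthonormal_eigenbasis_quadratic_form[OF basis orthonormal, symmetric])
      (auto intro: Sigma_mat_eigenvector)
  also have "\<dots> = SS * D"
    unfolding SS_def D_def Uc_def
    using centered_nonzero[OF U_nonconst] lam1_pos by (intro inner_Sigma_mat_centered) auto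
  finally have T_coeffs: "(\<Sum>k\<in>?K. mu k * (v k \<bullet> Uc)\<^sup>2) = SS * D" .
  have "mu ?n * SS \<le> (\<Sum>k\<in>?K. mu k * (v k \<bullet> Uc)\<^sup>2)"
    unfolding SS_coeffs sum_distrib_left
    by (rule sum_mono) (use mu_range in \<open>auto intro!: mult_right_mono\<close>)
  then have "mu ?n \<le> D"
    unfolding T_coeffs using \<open>0 < SS\<close> by (simp add: mult.commute[of "mu ?n"])
  then have "0 < D"
    using \<open>0 < mu ?n\<close> by simp
  have sum_mu: "mu ?n + mu 1 = 2 * sigma2 + rho2 * lam 1 + rho2 * lam ?n"
    unfolding mu_def by simp
  have "(t \<bullet> U)\<^sup>2 = (\<Sum>k\<in>?K. (v k \<bullet> t) * (v k \<bullet> Uc))\<^sup>2"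
    using parseval[of t Uc] unfolding Uc_def inner_centered_right[OF contrast] by simp
  also have "\<dots> \<le> (\<Sum>k\<in>?K. mu k * (v k \<bullet> t)\<^sup>2) * (mu ?n + mu 1)\<^sup>2 / (4 * mu ?n * mu 1)
                    * SS\<^sup>2 / (SS * D)"
    using Kantorovich_Cauchy_Schwarz[OF basis(1) \<open>0 < mu ?n\<close> mu_range,
        of "\<lambda>k. v k \<bullet> t" "\<lambda>k. v k \<bullet> Uc"]
    unfolding SS_coeffs[symmetric] T_coeffs .
  also have "\<dots> = (\<Sum>k\<in>?K. mu k * (v k \<bullet> t)\<^sup>2) * (mu ?n + mu 1)\<^sup>2
                    / (4 * mu 1 * mu ?n * D) * SS"
    using \<open>0 < SS\<close> \<open>0 < D\<close> by (simp add: power2_eq_square mult_ac)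
  finally show ?thesis
    unfolding c0_coeffs[symmetric] sum_mu SS_def Uc_def inner_centered_self D_def
    by (simp only: mu_def)
qed

definition gls_contrast :: "real^'n::finite^'n \<Rightarrow> real^'p::finite^'n \<Rightarrow> real^'n \<Rightarrow> real^'n" where
  "gls_contrast W X Z =
     (let A = matrix_inv (transpose X ** W ** X)
      in ((mat 1 - W ** X ** A ** transpose X) *v (W *v Z))
           /\<^sub>R (Z \<bullet> (W *v ((mat 1 - X ** A ** transpose X ** W) *v Z))))"

lemma gls_weights_eq_signed_contrast:
  "gls_weights sigma2 rho2 S X Z
     = (\<chi> i. (2 * Z$i - 1) * gls_contrast (matrix_inv (Sigma_mat sigma2 rho2 S)) X Z $ i)"
  unfolding gls_weights_def gls_contrast_def Let_def by (simp add: divide_inverse_commute)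

lemma matrix_inv_right:
  fixes A :: "real^'n::finite^'m::finite"
  assumes "invertible A"
  shows "A ** matrix_inv A = mat 1"
  using assms unfolding invertible_def matrix_inv_def by (rule conjunct1[OF someI_ex])

lemma gls_contrast_orthogonal_design:
  fixes W :: "real^'n::finite^'n" and X :: "real^'p::finite^'n"
  assumes "invertible (transpose X ** W ** X)"
  shows "transpose X *v gls_contrast W X Z = 0"
proof -
  let ?A = "matrix_inv (transpose X ** W ** X)"
  have "transpose X *v (W *v (X *v (?A *v y))) = ((transpose X ** W ** X) ** ?A) *v y" for y
    by (simp only: matrix_vector_mul_assoc matrix_mul_assoc)
  then have "transpose X *v (W *v (X *v (?A *v y))) = y" for y
    by (simp add: matrix_inv_right[OF assms])
  then show ?thesis
    unfolding gls_contrast_def Let_def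
    by (simp add: matrix_vector_mult_scaleR matrix_vector_mult_diff_rdistrib
        matrix_vector_mult_diff_distrib matrix_vector_mul_assoc[symmetric])
qed

lemma gls_contrast_inner_treatment:
  assumes "Z \<bullet> (W *v ((mat 1 - X ** matrix_inv (transpose X ** W ** X) ** transpose X ** W) *v Z)) \<noteq> 0"
  shows "gls_contrast W X Z \<bullet> Z = 1"
proof -
  let ?A = "matrix_inv (transpose X ** W ** X)"
  have "((mat 1 - W ** X ** ?A ** transpose X) *v (W *v Z)) \<bullet> Z
          = Z \<bullet> (W *v ((mat 1 - X ** ?A ** transpose X ** W) *v Z))"
    by (simp only: inner_commute[of _ Z] matrix_vector_mult_diff_rdistrib
        matrix_vector_mult_diff_distrib matrix_vector_mul_assoc[symmetric] matrix_vector_mul_lid)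
  then show ?thesis
    unfolding gls_contrast_def Let_def using assms by simp
qed

lemma wdiff_signed:
  fixes Z t :: "real^'n::finite"
  assumes Z01: "\<forall>i. Z$i = 0 \<or> Z$i = 1"
  shows "wdiff Z (\<chi> i. (2 * Z$i - 1) * t$i) a = t \<bullet> (\<chi> i. a i)"
proof -
  have "UNIV = {i. Z$i = 1} \<union> {i. Z$i = 0}" "{i. Z$i = 1} \<inter> {i. Z$i = (0::real)} = {}"
    using Z01 by auto
  then have "t \<bullet> (\<chi> i. a i) = (\<Sum>i\<in>{i. Z$i = 1}. t$i * a i) + (\<Sum>i\<in>{i. Z$i = 0}. t$i * a i)"
    unfolding inner_vec_def by (simp add: sum.union_disjoint[symmetric])
  moreover have "wdiff Z (\<chi> i. (2 * Z$i - 1) * t$i) a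
                   = (\<Sum>i\<in>{i. Z$i = 1}. t$i * a i) - (\<Sum>i\<in>{i. Z$i = 0}. - (t$i * a i))"
    unfolding wdiff_def by (intro arg_cong2[where f="(-)"] sum.cong) auto
  ultimately show ?thesis
    by (simp add: sum_negf)
qed

lemma sum_square_signed:
  fixes Z t :: "real^'n::finite"
  assumes "\<forall>i. Z$i = 0 \<or> Z$i = 1"
  shows "(\<Sum>i\<in>UNIV. ((2 * Z$i - 1) * t$i)\<^sup>2) = t \<bullet> t"
proof -
  have "((2 * Z$i - 1) * t$i)\<^sup>2 = t$i * t$i" for i
    using assms[rule_format, of i] by (auto simp: power2_eq_square)
  then show ?thesis
    by (simp add: inner_vec_def)
qed

lemma (in prob_space) expectation_contrast_linear_model:
  fixes t Z U :: "real^'n::finite" and X :: "real^'p::finite^'n"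
  assumes design: "transpose X *v t = 0" and treatment: "t \<bullet> Z = 1"
    and eps_int: "\<forall>i. integrable M (eps i)" and eps_mean: "\<forall>i. expectation (eps i) = 0"
  shows "expectation (\<lambda>\<omega>. t \<bullet> (\<chi> i. beta \<bullet> (X$i) + tau * Z$i + gamma * U$i + eps i \<omega>))
           = tau + gamma * (t \<bullet> U)"
proof -
  have "t \<bullet> (\<chi> i. beta \<bullet> (X$i)) = (transpose X *v t) \<bullet> beta"
    by (simp add: dot_lmul_matrix) (simp add: inner_vec_def matrix_vector_mult_def mult.commute)
  then have "t \<bullet> (\<chi> i. beta \<bullet> (X$i)) = 0"
    using design by simp
  moreover have "t \<bullet> (\<chi> i. beta \<bullet> (X$i) + tau * Z$i + gamma * U$i + eps i \<omega>)
      = t \<bullet> (\<chi> i. beta \<bullet> (X$i)) + tau * (t \<bullet> Z) + gamma * (t \<bullet> U) + (\<Sum>i\<in>UNIV. t$i * eps i \<omega>)"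
    for \<omega>
    by (simp add: inner_vec_def algebra_simps sum.distrib sum_distrib_left)
  moreover have "expectation (\<lambda>\<omega>. c + (\<Sum>i\<in>UNIV. t$i * eps i \<omega>)) = c" for c
    using eps_int eps_mean prob_space
    by (simp add: Bochner_Integration.integral_add Bochner_Integration.integral_sum)
  ultimately show ?thesis
    using treatment by simp
qed

theorem proposition3:
  fixes M :: "'a measure"
    and eps :: "'n::finite \<Rightarrow> 'a \<Rightarrow> real"
    and X :: "real^'p::finite^'n" and j0 :: 'p
    and Z U :: "real^'n"
    and beta :: "real^'p" and tau gamma sigma2 rho2 :: real
    and S :: "real^'n^'n" and v :: "nat \<Rightarrow> real^'n" and lam :: "nat \<Rightarrow> real"
  assumes Z01: "\<forall>i. Z$i = 0 \<or> Z$i = 1"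
    and treated: "\<exists>i. Z$i = 1" and control: "\<exists>i. Z$i = 0"
    and intercept: "\<forall>i. X$i$j0 = 1"
    and U_nonconst: "\<exists>i j. U$i \<noteq> U$j"
    and P: "prob_space M"
    and eps_meas: "\<forall>i. eps i \<in> borel_measurable M"
    and eps_indep: "prob_space.indep_vars M (\<lambda>_. borel) eps UNIV"
    and eps_ident: "\<forall>i j. distr M borel (eps i) = distr M borel (eps j)"
    and eps_int: "\<forall>i. integrable M (eps i)"
    and eps_sq_int: "\<forall>i. integrable M (\<lambda>\<omega>. (eps i \<omega>)^2)"
    and eps_mean: "\<forall>i. integral\<^sup>L M (eps i) = 0"
    and eps_var: "\<forall>i. integral\<^sup>L M (\<lambda>\<omega>. (eps i \<omega> - integral\<^sup>L M (eps i))^2) = sigma2"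
    and sigma_pos: "sigma2 > 0"
    and rho_nonneg: "rho2 \<ge> 0"
    and S_sym: "transpose S = S"
    and S_psd: "\<forall>x. x \<bullet> (S *v x) \<ge> 0"
    and v_orthonormal: "\<forall>k\<in>{1..CARD('n)}. \<forall>l\<in>{1..CARD('n)}.
                          v k \<bullet> v l = (if k = l then 1 else 0)"
    and v_eigen: "\<forall>k\<in>{1..CARD('n)}. S *v v k = lam k *\<^sub>R v k"
    and lam_sorted: "\<forall>k\<in>{1..CARD('n)}. \<forall>l\<in>{1..CARD('n)}. k \<le> l \<longrightarrow> lam l \<le> lam k"
    and lam_nonneg: "lam (CARD('n)) \<ge> 0"
    and lam1_pos: "lam 1 > 0"
    and XSX_inv: "invertible (transpose X ** matrix_inv (Sigma_mat sigma2 rho2 S) ** X)"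
    and den_nz: "Z \<bullet> (matrix_inv (Sigma_mat sigma2 rho2 S) *v
                   ((mat 1 - X ** matrix_inv (transpose X ** matrix_inv (Sigma_mat sigma2 rho2 S) ** X)
                       ** transpose X ** matrix_inv (Sigma_mat sigma2 rho2 S)) *v Z)) \<noteq> 0"
  shows "let w = gls_weights sigma2 rho2 S X Z;
             Y = (\<lambda>i \<omega>. beta \<bullet> (X$i) + tau * Z$i + gamma * U$i + eps i \<omega>);
             tau_hat = (\<lambda>\<omega>. wdiff Z w (\<lambda>i. Y i \<omega>));
             n = CARD('n);
             lam1 = lam 1; lamn = lam n;
             c0 = sigma2 * (\<Sum>i\<in>UNIV. (w$i)^2)
                  + rho2 * (\<Sum>k=1..n. lam k * (wdiff Z w (\<lambda>i. v k $ i))^2)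
         in \<bar>integral\<^sup>L M tau_hat - tau\<bar> = \<bar>gamma * wdiff Z w (\<lambda>i. U$i)\<bar>
            \<and> \<bar>gamma * wdiff Z w (\<lambda>i. U$i)\<bar>
              \<le> \<bar>gamma\<bar> * sqrt (c0 * (2 * sigma2 + rho2 * lam1 + rho2 * lamn)^2
                   / (4 * (sigma2 + rho2 * lam1) * (sigma2 + rho2 * lamn)
                        * (sigma2 + rho2 * lam1 * moran_I U S lam1))
                   * (\<Sum>i\<in>UNIV. (U$i - mean_vec U)^2))"
proof -
  interpret prob_space M by (rule P)
  define t where "t = gls_contrast (matrix_inv (Sigma_mat sigma2 rho2 S)) X Z"
  have design: "transpose X *v t = 0"
    unfolding t_def using XSX_inv by (rule gls_contrast_orthogonal_design)
  have treatment: "t \<bullet> Z = 1"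
    unfolding t_def using den_nz by (rule gls_contrast_inner_treatment)
  have "(\<chi> i. 1) = X *v axis j0 1"
    using intercept
    by (simp add: vec_eq_iff matrix_vector_mult_def axis_def if_distrib[of "\<lambda>x. _ * x"] sum.delta
        cong: if_cong)
  then have contrast: "t \<bullet> (\<chi> i. 1) = 0"
    using design by (simp add: dot_lmul_matrix[symmetric])
  have weights: "gls_weights sigma2 rho2 S X Z = (\<chi> i. (2 * Z$i - 1) * t$i)"
    unfolding t_def by (rule gls_weights_eq_signed_contrast)
  have expectation: "integral\<^sup>L M (\<lambda>\<omega>. t \<bullet> (\<chi> i. beta \<bullet> (X$i) + tau * Z$i + gamma * U$i + eps i \<omega>))
                       = tau + gamma * (t \<bullet> U)"
    using design treatment eps_int eps_mean by (rule expectation_contrast_linear_model)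
  have bias: "(t \<bullet> U)\<^sup>2 \<le> (sigma2 * (t \<bullet> t) + rho2 * (\<Sum>k=1..CARD('n). lam k * (v k \<bullet> t)\<^sup>2))
               * (2 * sigma2 + rho2 * lam 1 + rho2 * lam CARD('n))\<^sup>2
               / (4 * (sigma2 + rho2 * lam 1) * (sigma2 + rho2 * lam CARD('n))
                    * (sigma2 + rho2 * lam 1 * moran_I U S (lam 1)))
               * (\<Sum>i\<in>UNIV. (U$i - mean_vec U)\<^sup>2)"
    using v_orthonormal v_eigen lam_sorted lam_nonneg lam1_pos sigma_pos rho_nonneg contrast U_nonconst
    by (rule contrast_confounder_bound)
  show ?thesis
    unfolding Let_def weights wdiff_signed[OF Z01] expectation
    using real_sqrt_le_mono[OF bias]
    by (simp add: sum_square_signed[OF Z01] abs_mult mult_left_mono inner_commute)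
qed

end
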